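(* For all integers $k\geq 1$ and $n\geq \frac{1}{2}\left(\binom{2k}{k}-2\right)k^2$, $$f_2(n,k)\geq \left\lfloor \frac{n}{k}\right\rfloor+\binom{2k}{k}\frac{k}{2}-k.$$
   Context: For a set $A$ and integer $k\ge1$, the Kneser graph $KG(A,k)$ has vertex set the family of all $k$-element subsets of $A$, two vertices $X,Y$ being adjacent iff $X\cap Y=\emptyset$; $KG(n,k)$ denotes a Kneser graph with an $n$-element base set. The xor-product $G\cdot H$ of graphs $G,H$ has vertex set $V(G)\times V(H)$, and $(g,h)$, $(g',h')$ are adjacent iff exactly one of the following holds: $gg'\in E(G)$, $hh'\in E(H)$. $f_\ell(n,k)$ denotes the clique number of the xor-product of $\ell$ copies of $KG(n,k)$. Equivalently, $f_\ell(n,k)$ is the maximum size of a family $\mathcal S$ of subsets of $A_1\cup\dots\cup A_\ell$, where $A_1,\dots,A_\ell$ are pairwise disjoint $n$-element sets, such that $|S\cap A_i|=k$ for all $S\in\mathcal S$ and all $i$, and for any two distinct $S,T\in\mathcal S$ the number of indices $i\in\{1,\dots,\ell\}$ with $S\cap T\cap A_i=\emptyset$ is odd (an "$\ell$-semi-intersecting family with parameters $n$ and $k$"). *)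

theory Defs
  imports Complex_Main
begin

record 'a sgraph =
  verts :: "'a set"
  adj :: "'a \<Rightarrow> 'a \<Rightarrow> bool"

definition kneser :: "'a set \<Rightarrow> nat \<Rightarrow> 'a set sgraph" where
  "kneser A k = \<lparr> verts = {X. X \<subseteq> A \<and> card X = k},
                   adj = (\<lambda>X Y. X \<inter> Y = {}) \<rparr>"

definition xor_prod :: "'a sgraph \<Rightarrow> 'b sgraph \<Rightarrow> ('a \<times> 'b) sgraph" where
  "xor_prod G H = \<lparr> verts = verts G \<times> verts H,
     adj = (\<lambda>(g,h) (g',h'). adj G g g' \<noteq> adj H h h') \<rparr>"

text \<open>Xor-product of l copies of G, with vertices represented as lists of length l
  (the list x # xs corresponds to the pair (x, xs) in G . (G^l)); the product of
  zero copies is the one-vertex graph with no edges.\<close>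
fun xor_power :: "'a sgraph \<Rightarrow> nat \<Rightarrow> 'a list sgraph" where
  "xor_power G 0 = \<lparr> verts = {[]}, adj = (\<lambda>_ _. False) \<rparr>"
| "xor_power G (Suc l) =
     \<lparr> verts = {x # xs | x xs. x \<in> verts G \<and> xs \<in> verts (xor_power G l)},
       adj = (\<lambda>u v. adj G (hd u) (hd v) \<noteq> adj (xor_power G l) (tl u) (tl v)) \<rparr>"

definition is_clique :: "'a sgraph \<Rightarrow> 'a set \<Rightarrow> bool" where
  "is_clique G C \<longleftrightarrow> C \<subseteq> verts G \<and> (\<forall>x\<in>C. \<forall>y\<in>C. x \<noteq> y \<longrightarrow> adj G x y)"

definition clique_number :: "'a sgraph \<Rightarrow> nat" where
  "clique_number G = Sup {card C | C. finite C \<and> is_clique G C}"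

definition f :: "nat \<Rightarrow> nat \<Rightarrow> nat \<Rightarrow> nat" where
  "f l n k = clique_number (xor_power (kneser {0..<n} k) l)"

end

(*
  Cut {0..<n} into the n div k blocks of k consecutive points and group the first M * k
  blocks into M grids of k x k points, where M = (2k choose k)/2 - 1.  A family of pairs of
  k-sets is formed from every block (a row), paired with a label, and every column of the
  grids, paired with the complement in {0..<2k} of the label of its grid.  The labels of the
  grids are distinct k-subsets of {0..<2k} containing 0 (there are (2k choose k)/2 of these),
  and the blocks outside the grids all get the label {0..<k}, which is not the label of any grid.

  Two k-subsets of a 2k-set are disjoint iff they are complementary, and no two labels are
  complementary as both contain 0.  Hence two first coordinates are disjoint exactly for a row
  and a column of the same grid, which is exactly when the second coordinates meet.  The
  family is therefore 2-semi-intersecting, of size n div k + M * k.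
*)
theory Submission
  imports Defs
begin

lemma finite_verts_xor_power:
  assumes "finite (verts G)"
  shows "finite (verts (xor_power G l))"
proof (induction l)
  case (Suc l)
  have "verts (xor_power G (Suc l)) = (\<lambda>(x, xs). x # xs) ` (verts G \<times> verts (xor_power G l))"
    by auto
  with Suc assms show ?case by simp
qed simp

lemma card_le_clique_number:
  assumes "finite (verts G)" and "is_clique G C"
  shows "card C \<le> clique_number G"
  unfolding clique_number_def
proof (rule cSup_upper)
  show "card C \<in> {card C |C. finite C \<and> is_clique G C}"
    using assms finite_subset is_clique_def by blast
  show "bdd_above {card C |C. finite C \<and> is_clique G C}"
    using assms(1) by (intro bdd_aboveI[of _ "card (verts G)"]) (auto simp: is_clique_def card_mono)
qed

lemma is_clique_xor_power_2I:
  assumes "P \<subseteq> verts G \<times> verts G"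
    and "\<And>x y x' y'. (x, y) \<in> P \<Longrightarrow> (x', y') \<in> P \<Longrightarrow> (x, y) \<noteq> (x', y') \<Longrightarrow>
           adj G x x' \<noteq> adj G y y'"
  shows "is_clique (xor_power G 2) ((\<lambda>(x, y). [x, y]) ` P)"
  using assms by (auto simp: is_clique_def numeral_2_eq_2)

lemma card_le_f2_if_semi_intersecting:
  assumes "\<And>X Y. (X, Y) \<in> P \<Longrightarrow> X \<subseteq> {0..<n} \<and> card X = k \<and> Y \<subseteq> {0..<n} \<and> card Y = k"
    and "\<And>X Y X' Y'. (X, Y) \<in> P \<Longrightarrow> (X', Y') \<in> P \<Longrightarrow> (X, Y) \<noteq> (X', Y') \<Longrightarrow>
           (X \<inter> X' = {}) \<noteq> (Y \<inter> Y' = {})"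
  shows "card P \<le> f 2 n k"
proof -
  let ?G = "kneser {0..<n} k"
  have "is_clique (xor_power ?G 2) ((\<lambda>(x, y). [x, y]) ` P)"
  proof (rule is_clique_xor_power_2I)
    show "P \<subseteq> verts ?G \<times> verts ?G"
      using assms(1) by (fastforce simp: kneser_def)
  qed (use assms(2) in \<open>simp add: kneser_def\<close>)
  moreover have "finite (verts ?G)"
    by (simp add: kneser_def)
  ultimately have "card ((\<lambda>(x, y). [x, y]) ` P) \<le> f 2 n k"
    unfolding f_def by (intro card_le_clique_number finite_verts_xor_power)
  moreover have "inj_on (\<lambda>(x, y). [x, y]) P"
    by (auto simp: inj_on_def)
  ultimately show ?thesis
    by (simp add: card_image)
qed

lemma half_subsets_disjoint_iff:
  assumes "finite B" "card B = 2 * k" "X \<subseteq> B" "Y \<subseteq> B" "card X = k" "card Y = k"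
  shows "X \<inter> Y = {} \<longleftrightarrow> Y = B - X"
proof
  assume "X \<inter> Y = {}"
  then have "Y \<subseteq> B - X"
    using assms(4) by blast
  moreover have "card (B - X) = card Y"
    using assms by (simp add: card_Diff_subset finite_subset)
  ultimately show "Y = B - X"
    using assms(1) by (simp add: card_subset_eq)
qed auto

lemma half_subsets_through_point:
  assumes "finite B" "card B = 2 * k" "X \<subseteq> B" "Y \<subseteq> B" "card X = k" "card Y = k"
    and "a \<in> X" "a \<in> Y"
  shows "(B - X) \<inter> (B - Y) \<noteq> {}" and "X \<inter> (B - Y) = {} \<longleftrightarrow> X = Y"
proof -
  have card_compl: "card (B - Z) = k" if "Z \<subseteq> B" "card Z = k" for Z
    using that assms(1,2) by (simp add: card_Diff_subset finite_subset)
  show "(B - X) \<inter> (B - Y) \<noteq> {}"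
    using half_subsets_disjoint_iff[OF assms(1,2), of "B - X" "B - Y"] assms
    by (auto simp: card_compl double_diff)
  show "X \<inter> (B - Y) = {} \<longleftrightarrow> X = Y"
    using half_subsets_disjoint_iff[OF assms(1,2), of X "B - Y"] assms
    by (auto simp: card_compl double_diff)
qed

lemma card_half_subsets_containing:
  assumes "finite B" "card B = 2 * k" "a \<in> B"
  shows "2 * card {Y. Y \<subseteq> B \<and> card Y = k \<and> a \<in> Y} = (2 * k) choose k"
proof -
  let ?Y = "{Y. Y \<subseteq> B \<and> card Y = k \<and> a \<in> Y}"
  have card_compl: "card (B - Y) = k" if "Y \<subseteq> B" "card Y = k" for Y
    using that assms by (simp add: card_Diff_subset finite_subset)
  have "{Y. Y \<subseteq> B \<and> card Y = k} = ?Y \<union> (\<lambda>Y. B - Y) ` ?Y"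
  proof (intro equalityI subsetI)
    fix Y assume Y: "Y \<in> {Y. Y \<subseteq> B \<and> card Y = k}"
    show "Y \<in> ?Y \<union> (\<lambda>Y. B - Y) ` ?Y"
    proof (cases "a \<in> Y")
      case False
      with Y assms(3) have "B - Y \<in> ?Y" and "Y = B - (B - Y)"
        by (auto simp: card_compl)
      then show ?thesis by blast
    qed (use Y in simp)
  qed (auto simp: card_compl)
  moreover have "?Y \<inter> (\<lambda>Y. B - Y) ` ?Y = {}"
    by blast
  moreover have "inj_on (\<lambda>Y. B - Y) ?Y"
    by (auto simp: inj_on_def double_diff)
  moreover have "finite ?Y"
    using assms(1) by simp
  ultimately have "card {Y. Y \<subseteq> B \<and> card Y = k} = 2 * card ?Y"
    by (simp add: card_Un_disjoint card_image)
  then show ?thesis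
    using n_subsets[OF assms(1), of k] assms(2) by simp
qed

lemma even_central_binomial: "0 < k \<Longrightarrow> even ((2 * k) choose k)"
  using card_half_subsets_containing[of "{0..<2 * k}" k 0] by (simp add: dvd_def) metis

definition block :: "nat \<Rightarrow> nat \<Rightarrow> nat set" where
  "block k c = {c * k..<c * k + k}"

text \<open>Grid \<open>j\<close> consists of the blocks \<open>j * k + t\<close> for \<open>t < k\<close>; its column \<open>s\<close> takes
  the \<open>s\<close>-th point of each of these blocks.\<close>
definition column :: "nat \<Rightarrow> nat \<Rightarrow> nat \<Rightarrow> nat set" where
  "column k j s = (\<lambda>t. (j * k + t) * k + s) ` {..<k}"

lemma mem_block_iff:
  assumes "0 < k"
  shows "x \<in> block k c \<longleftrightarrow> x div k = c"
proof
  assume "x \<in> block k c"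
  then show "x div k = c"
    by (intro div_nat_eqI) (auto simp: block_def mult.commute)
next
  assume "x div k = c"
  moreover have "x = x div k * k + x mod k" and "x mod k < k"
    using assms by simp_all
  ultimately show "x \<in> block k c"
    unfolding block_def by (metis atLeastLessThan_iff le_add1 add_less_cancel_left)
qed

lemma mem_column_iff: "s < k \<Longrightarrow> x \<in> column k j s \<longleftrightarrow> x mod k = s \<and> x div k div k = j"
proof
  assume "s < k" and "x mod k = s \<and> x div k div k = j"
  then have "x = (j * k + x div k mod k) * k + s" and "x div k mod k < k"
    by (metis div_mult_mod_eq mult.commute, simp)
  then show "x \<in> column k j s"
    unfolding column_def by blast
qed (auto simp: column_def)

lemma card_block: "card (block k c) = k"
  by (simp add: block_def)

lemma card_column: "card (column k j s) = k"
  unfolding column_def by (subst card_image) (auto simp: inj_on_def)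

lemma block_subset: "(c + 1) * k \<le> n \<Longrightarrow> block k c \<subseteq> {0..<n}"
  by (auto simp: block_def)

lemma column_subset: "s < k \<Longrightarrow> (j + 1) * k * k \<le> n \<Longrightarrow> column k j s \<subseteq> {0..<n}"
proof
  fix x assume "s < k" "(j + 1) * k * k \<le> n" "x \<in> column k j s"
  then obtain t where "t < k" "x = (j * k + t) * k + s"
    by (auto simp: column_def)
  then have "x < (j * k + t + 1) * k" using \<open>s < k\<close> by simp
  also have "\<dots> \<le> (j + 1) * k * k"
    using \<open>t < k\<close> by (intro mult_le_mono1) simp
  finally show "x \<in> {0..<n}"
    using \<open>(j + 1) * k * k \<le> n\<close> by simp
qed

lemma block_eq_iff:
  assumes "0 < k"
  shows "block k c = block k c' \<longleftrightarrow> c = c'"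
proof
  assume "block k c = block k c'"
  moreover have "c * k \<in> block k c"
    using assms by (simp add: mem_block_iff)
  ultimately show "c = c'"
    using assms by (simp add: mem_block_iff)
qed simp

lemma column_eq_iff:
  assumes "s < k" "s' < k"
  shows "column k j s = column k j' s' \<longleftrightarrow> (j, s) = (j', s')"
proof
  assume "column k j s = column k j' s'"
  moreover have "j * k * k + s \<in> column k j s"
    using assms by (simp add: mem_column_iff)
  ultimately show "(j, s) = (j', s')"
    using assms by (simp add: mem_column_iff)
qed simp

lemma block_disjoint_iff:
  assumes "0 < k"
  shows "block k c \<inter> block k c' = {} \<longleftrightarrow> c \<noteq> c'"
proof -
  have "c * k \<in> block k c"
    using assms by (simp add: mem_block_iff)
  moreover have "c \<noteq> c' \<Longrightarrow> block k c \<inter> block k c' = {}"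
    using assms by (auto simp: mem_block_iff)
  ultimately show ?thesis
    by blast
qed

lemma column_disjoint_iff:
  assumes "s < k" "s' < k"
  shows "column k j s \<inter> column k j' s' = {} \<longleftrightarrow> (j, s) \<noteq> (j', s')"
proof -
  have "j * k * k + s \<in> column k j s"
    using assms by (simp add: mem_column_iff)
  moreover have "(j, s) \<noteq> (j', s') \<Longrightarrow> column k j s \<inter> column k j' s' = {}"
    using assms by (auto simp: mem_column_iff)
  ultimately show ?thesis
    by blast
qed

lemma block_column_disjoint_iff:
  assumes "s < k"
  shows "block k c \<inter> column k j s = {} \<longleftrightarrow> c div k \<noteq> j"
proof -
  have "c * k + s \<in> block k c \<inter> column k (c div k) s"
    using assms by (simp add: mem_block_iff mem_column_iff)
  moreover have "c div k \<noteq> j \<Longrightarrow> block k c \<inter> column k j s = {}"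
    using assms by (auto simp: mem_block_iff mem_column_iff)
  ultimately show ?thesis
    by blast
qed

lemma ex_labelling_with_default:
  assumes "finite \<Y>" "y\<^sub>0 \<in> \<Y>" "M < card \<Y>"
  obtains g where "\<And>j. g j \<in> \<Y>" "\<And>j. M \<le> j \<Longrightarrow> g j = y\<^sub>0"
    "\<And>i j. j < M \<Longrightarrow> g i = g j \<Longrightarrow> i = j"
proof -
  have "card {..<M} \<le> card (\<Y> - {y\<^sub>0})"
    using assms by simp
  then obtain h where h: "h ` {..<M} \<subseteq> \<Y> - {y\<^sub>0}" "inj_on h {..<M}"
    using card_le_inj[of "{..<M}" "\<Y> - {y\<^sub>0}"] assms(1) by auto
  show thesis
  proof (rule that[of "\<lambda>j. if j < M then h j else y\<^sub>0"])
    show "\<And>i j. j < M \<Longrightarrow> (if i < M then h i else y\<^sub>0) = (if j < M then h j else y\<^sub>0) \<Longrightarrow> i = j"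
      using h by (auto simp: inj_on_def split: if_splits)
  qed (use h assms(2) in auto)
qed

locale grid_labelling =
  fixes k M :: nat and g :: "nat \<Rightarrow> nat set"
  assumes k_pos: "0 < k"
    and g_subset: "g j \<subseteq> {0..<2 * k}"
    and card_g: "card (g j) = k"
    and zero_in_g: "0 \<in> g j"
    and g_default: "M \<le> j \<Longrightarrow> g j = {0..<k}"
    and g_inj: "j < M \<Longrightarrow> g i = g j \<Longrightarrow> i = j"
begin

definition rows :: "nat \<Rightarrow> (nat set \<times> nat set) set" where
  "rows n = (\<lambda>c. (g (c div k), block k c)) ` {..<n div k}"

definition cols :: "(nat set \<times> nat set) set" where
  "cols = (\<lambda>(j, s). ({0..<2 * k} - g j, column k j s)) ` ({..<M} \<times> {..<k})"

lemma card_compl_label: "card ({0..<2 * k} - g j) = k"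
  using card_Diff_subset[OF finite_subset[OF g_subset]] g_subset card_g by simp

lemma compl_labels_intersect: "({0..<2 * k} - g i) \<inter> ({0..<2 * k} - g j) \<noteq> {}"
  using half_subsets_through_point(1)[of "{0..<2 * k}" k "g i" "g j" 0]
  by (simp add: g_subset card_g zero_in_g)

lemma label_disjoint_compl_iff: "g i \<inter> ({0..<2 * k} - g j) = {} \<longleftrightarrow> g i = g j"
  using half_subsets_through_point(2)[of "{0..<2 * k}" k "g i" "g j" 0]
  by (simp add: g_subset card_g zero_in_g)

lemma two_le_k: "0 < M \<Longrightarrow> 2 \<le> k"
proof (rule ccontr)
  assume "0 < M" "\<not> 2 \<le> k"
  then have "k = 1"
    using k_pos by simp
  then have "g j = {0}" for j
    using card_g zero_in_g by (metis card_1_singletonE singletonD One_nat_def)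
  then show False
    using g_inj[of 0 M] \<open>0 < M\<close> by simp
qed

lemma card_rows_Un_cols: "card (rows n \<union> cols) = n div k + M * k"
proof -
  have "inj_on (\<lambda>c. (g (c div k), block k c)) {..<n div k}"
    by (auto simp: inj_on_def block_eq_iff[OF k_pos])
  moreover have "inj_on (\<lambda>(j, s). ({0..<2 * k} - g j, column k j s)) ({..<M} \<times> {..<k})"
    by (auto simp: inj_on_def column_eq_iff)
  moreover have "rows n \<inter> cols = {}"
    using zero_in_g by (auto simp: rows_def cols_def)
  ultimately show ?thesis
    by (simp add: rows_def cols_def card_Un_disjoint card_image card_cartesian_product)
qed

lemma mem_rows_cols_cases:
  assumes "p \<in> rows n \<union> cols"
  obtains (row) c where "c < n div k" "p = (g (c div k), block k c)"
    | (col) j s where "j < M" "s < k" "p = ({0..<2 * k} - g j, column k j s)"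
  using assms by (auto simp: rows_def cols_def)

lemma rows_cols_in_kneser:
  assumes "M * k^2 \<le> n" and "(X, Y) \<in> rows n \<union> cols"
  shows "X \<subseteq> {0..<n} \<and> card X = k \<and> Y \<subseteq> {0..<n} \<and> card Y = k"
proof -
  have wide: "2 * k \<le> n" if "0 < M"
  proof -
    have "2 * k \<le> k * k"
      using two_le_k[OF that] by simp
    also have "\<dots> \<le> M * k^2"
      using that by (simp add: power2_eq_square)
    finally show ?thesis
      using assms(1) by simp
  qed
  from assms(2) show ?thesis
  proof (cases rule: mem_rows_cols_cases)
    case (row c)
    then have "(c + 1) * k \<le> n"
      by (metis Suc_eq_plus1 Suc_leI div_times_less_eq_dividend le_trans mult_le_mono1)
    moreover have "g (c div k) \<subseteq> {0..<n}"
      using g_subset[of "c div k"] g_default[of "c div k"] wide \<open>(c + 1) * k \<le> n\<close>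
      by (cases "c div k < M") force+
    ultimately show ?thesis
      using row by (simp add: card_g card_block block_subset)
  next
    case (col j s)
    have "(j + 1) * k * k \<le> M * k * k"
      using col(1) by (intro mult_le_mono1) simp
    also have "\<dots> \<le> n"
      using assms(1) by (simp add: power2_eq_square mult.assoc)
    finally have "(j + 1) * k * k \<le> n" .
    moreover have "{0..<2 * k} - g j \<subseteq> {0..<n}"
      using wide col(1) by auto
    ultimately show ?thesis
      using col by (simp add: card_compl_label card_column column_subset)
  qed
qed

lemma rows_cols_semi_intersecting:
  assumes "(X, Y) \<in> rows n \<union> cols" "(X', Y') \<in> rows n \<union> cols" "(X, Y) \<noteq> (X', Y')"
  shows "(X \<inter> X' = {}) \<noteq> (Y \<inter> Y' = {})"
proof -
  have row_row: "(g (c div k) \<inter> g (c' div k) = {}) \<noteq> (block k c \<inter> block k c' = {})"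
    if "c \<noteq> c'" for c c'
    using zero_in_g block_disjoint_iff[OF k_pos] that by blast
  have col_col: "(({0..<2 * k} - g j) \<inter> ({0..<2 * k} - g j') = {}) \<noteq>
      (column k j s \<inter> column k j' s' = {})"
    if "(j, s) \<noteq> (j', s')" "s < k" "s' < k" for j s j' s'
    using compl_labels_intersect column_disjoint_iff that by blast
  have row_col: "(g (c div k) \<inter> ({0..<2 * k} - g j) = {}) \<noteq> (block k c \<inter> column k j s = {})"
    if "j < M" "s < k" for c j s
    using label_disjoint_compl_iff[of "c div k" j] g_inj[OF that(1)] block_column_disjoint_iff[OF that(2)]
    by auto
  from assms(1) show ?thesis
  proof (cases rule: mem_rows_cols_cases)
    case (row c)
    from assms(2) show ?thesis
    proof (cases rule: mem_rows_cols_cases)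
      case (row c')
      then show ?thesis
        using \<open>(X, Y) = _\<close> assms(3) row_row[of c c'] by auto
    next
      case (col j s)
      then show ?thesis
        using \<open>(X, Y) = _\<close> row_col[of j s c] by auto
    qed
  next
    case (col j s)
    from assms(2) show ?thesis
    proof (cases rule: mem_rows_cols_cases)
      case (row c)
      then show ?thesis
        using \<open>(X, Y) = _\<close> col(1,2) row_col[of j s c] by (auto simp: Int_commute)
    next
      case (col j' s')
      then show ?thesis
        using \<open>(X, Y) = _\<close> assms(3) col_col[of j s j' s'] \<open>s < k\<close> by auto
    qed
  qed
qed

lemma f2_ge: "M * k^2 \<le> n \<Longrightarrow> n div k + M * k \<le> f 2 n k"
  using card_le_f2_if_semi_intersecting[of "rows n \<union> cols" n k]
    rows_cols_in_kneser rows_cols_semi_intersecting card_rows_Un_cols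
  by simp

end

lemma f2_ge_of_central_binomial:
  assumes "2 * (M + 1) \<le> (2 * k) choose k" and "M * k^2 \<le> n"
  shows "n div k + M * k \<le> f 2 n k"
proof -
  have "0 < k"
    using assms(1) by (cases k) auto
  let ?\<Y> = "{Y. Y \<subseteq> {0..<2 * k} \<and> card Y = k \<and> 0 \<in> Y}"
  have fin: "finite ?\<Y>"
    by simp
  have y0_mem: "{0..<k} \<in> ?\<Y>"
    using \<open>0 < k\<close> by auto
  have M_less: "M < card ?\<Y>"
    using card_half_subsets_containing[of "{0..<2 * k}" k 0] assms(1) \<open>0 < k\<close> by simp
  obtain g where g_mem: "\<And>j. g j \<in> ?\<Y>"
    and g_default: "\<And>j. M \<le> j \<Longrightarrow> g j = {0..<k}"
    and g_inj: "\<And>i j. j < M \<Longrightarrow> g i = g j \<Longrightarrow> i = j"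
    using ex_labelling_with_default[OF fin y0_mem M_less] by blast
  interpret grid_labelling k M g
  proof unfold_locales
    show "g j \<subseteq> {0..<2 * k}" "card (g j) = k" "0 \<in> g j" for j
      using g_mem[of j] by auto
  qed (use \<open>0 < k\<close> g_default g_inj in auto)
  show ?thesis
    using f2_ge[OF assms(2)] .
qed

theorem theorem1p1:
  fixes k n :: nat
  assumes "k \<ge> 1"
    and "2 * real n \<ge> (real ((2*k) choose k) - 2) * real k ^ 2"
  shows "real (f 2 n k) \<ge> real (n div k) + real ((2*k) choose k) * real k / 2 - real k"
proof -
  obtain M where central: "(2 * k) choose k = 2 * (M + 1)"
  proof -
    obtain N where "(2 * k) choose k = 2 * N"
      using even_central_binomial[of k] assms(1) by (auto elim: evenE)
    moreover have "0 < (2 * k) choose k"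
      by simp
    ultimately show thesis
      using that[of "N - 1"] by simp
  qed
  with assms(2) have "real (M * k^2) \<le> real n"
    by simp
  then have "n div k + M * k \<le> f 2 n k"
    by (intro f2_ge_of_central_binomial) (simp_all only: central order.refl of_nat_le_iff)
  then have "real (n div k) + real M * real k \<le> real (f 2 n k)"
    by (metis of_nat_add of_nat_le_iff of_nat_mult)
  moreover have "real ((2 * k) choose k) * real k / 2 - real k = real M * real k"
    unfolding central by (simp add: algebra_simps)
  ultimately show ?thesis
    by linarith
qed

end
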